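(* Let $A$ be $K\{X\}_\infty$ or $K\{X\}$, regarded as the unitary commutative algebra $(A,\sqcup\!\sqcup)$ with augmentation ideal $\bar A=\bigoplus_{n\ge1}A^{(n)}$, and let $\nabla_2:A\to A\otimes A$ be defined by $\langle\vee^2(f_1,f_2),g\rangle=\langle f_1\otimes f_2,\nabla_2(g)\rangle$ for all $f_1,f_2\in A$. Then: (i) $\nabla_2$ is a morphism of commutative algebras $(A,\sqcup\!\sqcup)\to(A\otimes A,\sqcup\!\sqcup\otimes\sqcup\!\sqcup)$; (ii) $\nabla_2$ is not coassociative, and for a nonempty monomial $T$ with root $\rho$, $\nabla_2(T)=T\otimes1+1\otimes T+T^1\otimes T^2$ if $T=\vee^2(T^1,T^2)$, and $\nabla_2(T)=T\otimes1+1\otimes T$ if $\rho$ has arity different from $2$; (iii) with $\nabla'_2(f):=\nabla_2(f)-f\otimes1-1\otimes f$, one has $\nabla'_2(f)\in\bar A\otimes\bar A$ for all $f\in\bar A$. In other words, $(A,\sqcup\!\sqcup)$ with $\nabla_2$ and the augmentation as counit is a co-unital-magma object in the category of commutative algebras.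
   Context: $K$ is a field of characteristic $0$, $X=\{x_1,x_2,\dots\}$ a finite or countable set of variables. A planar rooted tree is reduced if no vertex has exactly one incoming edge. $K\{X\}_\infty$ has basis the monomials: the empty tree $1$ and all planar reduced rooted trees with leaves labelled by elements of $X$, graded by number of leaves ($A^{(n)}$); for $k\ge2$, $\vee^k$ grafts $k$ nonempty trees (in order) onto a new root, extended multilinearly, with unit conventions (arguments $1$ omitted, so $\vee^2(1,a)=\vee^2(a,1)=a$, $\vee^k(1,\dots,1)=1$). $K\{X\}$ is the span of $1$ and the binary monomials. $A\otimes A$ carries the operations componentwise, and the co-addition $\Delta_a$ is the unique unital homomorphism with $\Delta_a(x_i)=x_i\otimes1+1\otimes x_i$. $\langle\,,\rangle$ is the bilinear form on $A$ making monomials orthonormal, extended factorwise to tensor products; $\sqcup\!\sqcup$ is defined by $\langle g_1\sqcup\!\sqcup g_2,h\rangle=\langle g_1\otimes g_2,\Delta_a(h)\rangle$ for all $h\in A$; $A\otimes A$ is a commutative algebra with the componentwise product $(a\otimes b)(a'\otimes b')=(a\sqcup\!\sqcup a')\otimes(b\sqcup\!\sqcup b')$. *)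

theory Defs
  imports Main "HOL-Library.Countable"
begin

datatype 'x tree = Leaf 'x | Node "'x tree list"

fun reduced :: "'x tree \<Rightarrow> bool" where
  "reduced (Leaf x) = True"
| "reduced (Node ts) = (2 \<le> length ts \<and> (\<forall>t\<in>set ts. reduced t))"

fun binary :: "'x tree \<Rightarrow> bool" where
  "binary (Leaf x) = True"
| "binary (Node ts) = (length ts = 2 \<and> (\<forall>t\<in>set ts. binary t))"

fun arity :: "'x tree \<Rightarrow> nat" where
  "arity (Leaf x) = 0"
| "arity (Node ts) = length ts"

text \<open>Monomials: the empty tree One, or a tree.\<close>
datatype 'x mono = One | Tr "'x tree"

text \<open>The flag bin selects A = K{X} (bin = True, binary monomials) or
  A = K{X}_infinity (bin = False).\<close>
fun validm :: "bool \<Rightarrow> 'x mono \<Rightarrow> bool" where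
  "validm bin One = True"
| "validm bin (Tr t) = (reduced t \<and> (bin \<longrightarrow> binary t))"

definition supp :: "('a \<Rightarrow> 'k::zero) \<Rightarrow> 'a set" where
  "supp f = {a. f a \<noteq> 0}"

definition basis :: "'a \<Rightarrow> 'a \<Rightarrow> 'k::{zero,one}" where
  "basis a = (\<lambda>y. if y = a then 1 else 0)"

text \<open>Elements of A, of A tensor A (basis: pairs of monomials) and of the augmentation ideal.\<close>
definition inA :: "bool \<Rightarrow> ('x mono \<Rightarrow> 'k::zero) \<Rightarrow> bool" where
  "inA bin f \<longleftrightarrow> finite (supp f) \<and> (\<forall>m. f m \<noteq> 0 \<longrightarrow> validm bin m)"

definition inAA :: "bool \<Rightarrow> ('x mono \<times> 'x mono \<Rightarrow> 'k::zero) \<Rightarrow> bool" where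
  "inAA bin u \<longleftrightarrow> finite (supp u) \<and>
     (\<forall>m n. u (m, n) \<noteq> 0 \<longrightarrow> validm bin m \<and> validm bin n)"

definition inAbar :: "bool \<Rightarrow> ('x mono \<Rightarrow> 'k::zero) \<Rightarrow> bool" where
  "inAbar bin f \<longleftrightarrow> inA bin f \<and> f One = 0"

definition inAbarAbar :: "bool \<Rightarrow> ('x mono \<times> 'x mono \<Rightarrow> 'k::zero) \<Rightarrow> bool" where
  "inAbarAbar bin u \<longleftrightarrow> inAA bin u \<and> (\<forall>m. u (One, m) = 0 \<and> u (m, One) = 0)"

definition tensor :: "('a \<Rightarrow> 'k::times) \<Rightarrow> ('b \<Rightarrow> 'k) \<Rightarrow> ('a \<times> 'b \<Rightarrow> 'k)" where
  "tensor f g = (\<lambda>(a, b). f a * g b)"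

definition pair :: "('a \<Rightarrow> 'k::comm_ring_1) \<Rightarrow> ('a \<Rightarrow> 'k) \<Rightarrow> 'k" where
  "pair f g = (\<Sum>a\<in>supp f. f a * g a)"

text \<open>Multilinear extension of a map defined on lists of basis elements.\<close>
fun mlin :: "('a list \<Rightarrow> 'b) \<Rightarrow> ('a \<Rightarrow> 'k::comm_ring_1) list \<Rightarrow> 'b \<Rightarrow> 'k" where
  "mlin F [] = basis (F [])"
| "mlin F (f # fs) = (\<lambda>y. \<Sum>a\<in>supp f. f a * mlin (\<lambda>as. F (a # as)) fs y)"

definition trees_of :: "'x mono list \<Rightarrow> 'x tree list" where
  "trees_of ms = concat (map (\<lambda>m. case m of One \<Rightarrow> [] | Tr t \<Rightarrow> [t]) ms)"

text \<open>vee^k on monomials with the unit conventions (arguments One are omitted).\<close>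
definition vee_mono :: "'x mono list \<Rightarrow> 'x mono" where
  "vee_mono ms = (case trees_of ms of [] \<Rightarrow> One | [t] \<Rightarrow> Tr t | ts \<Rightarrow> Tr (Node ts))"

definition vee2 :: "('x mono \<Rightarrow> 'k::comm_ring_1) \<Rightarrow> ('x mono \<Rightarrow> 'k) \<Rightarrow> ('x mono \<Rightarrow> 'k)" where
  "vee2 f g = mlin vee_mono [f, g]"

definition veeT :: "('x mono \<times> 'x mono \<Rightarrow> 'k::comm_ring_1) list \<Rightarrow> ('x mono \<times> 'x mono \<Rightarrow> 'k)" where
  "veeT us = mlin (\<lambda>ps. (vee_mono (map fst ps), vee_mono (map snd ps))) us"

text \<open>The unital homomorphism with Delta_a(x) = x \<otimes> 1 + 1 \<otimes> x, given on trees by its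
  homomorphism equations.\<close>
fun deltaT :: "'x tree \<Rightarrow> ('x mono \<times> 'x mono \<Rightarrow> 'k::comm_ring_1)" where
  "deltaT (Leaf x) = (\<lambda>p. basis (Tr (Leaf x), One) p + basis (One, Tr (Leaf x)) p)"
| "deltaT (Node ts) = veeT (map deltaT ts)"

fun deltaA :: "'x mono \<Rightarrow> ('x mono \<times> 'x mono \<Rightarrow> 'k::comm_ring_1)" where
  "deltaA One = basis (One, One)"
| "deltaA (Tr t) = deltaT t"

definition shuffle :: "bool \<Rightarrow> ('x mono \<Rightarrow> 'k::comm_ring_1) \<Rightarrow> ('x mono \<Rightarrow> 'k) \<Rightarrow> ('x mono \<Rightarrow> 'k)" where
  "shuffle bin g1 g2 = (\<lambda>h. if validm bin h then pair (tensor g1 g2) (deltaA h) else 0)"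

definition tprod :: "bool \<Rightarrow> ('x mono \<times> 'x mono \<Rightarrow> 'k::comm_ring_1) \<Rightarrow> ('x mono \<times> 'x mono \<Rightarrow> 'k)
    \<Rightarrow> ('x mono \<times> 'x mono \<Rightarrow> 'k)" where
  "tprod bin u v = (\<lambda>(p, q). \<Sum>(m, n)\<in>supp u. \<Sum>(m', n')\<in>supp v.
      u (m, n) * v (m', n') * shuffle bin (basis m) (basis m') p * shuffle bin (basis n) (basis n') q)"

definition nabla2 :: "bool \<Rightarrow> ('x mono \<Rightarrow> 'k::comm_ring_1) \<Rightarrow> ('x mono \<times> 'x mono \<Rightarrow> 'k)" where
  "nabla2 bin g = (\<lambda>(m1, m2). if validm bin m1 \<and> validm bin m2
      then pair (vee2 (basis m1) (basis m2)) g else 0)"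

definition nabla2' :: "bool \<Rightarrow> ('x mono \<Rightarrow> 'k::comm_ring_1) \<Rightarrow> ('x mono \<times> 'x mono \<Rightarrow> 'k)" where
  "nabla2' bin f = (\<lambda>p. nabla2 bin f p - tensor f (basis One) p - tensor (basis One) f p)"

text \<open>nabla_2 \<otimes> id and id \<otimes> nabla_2 : A \<otimes> A \<rightarrow> A \<otimes> A \<otimes> A (triples of monomials).\<close>
definition nabla_left :: "bool \<Rightarrow> ('x mono \<times> 'x mono \<Rightarrow> 'k::comm_ring_1)
    \<Rightarrow> ('x mono \<times> 'x mono \<times> 'x mono \<Rightarrow> 'k)" where
  "nabla_left bin u = (\<lambda>(m1, m2, m3). \<Sum>(m, n)\<in>supp u.
      u (m, n) * nabla2 bin (basis m) (m1, m2) * basis n m3)"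

definition nabla_right :: "bool \<Rightarrow> ('x mono \<times> 'x mono \<Rightarrow> 'k::comm_ring_1)
    \<Rightarrow> ('x mono \<times> 'x mono \<times> 'x mono \<Rightarrow> 'k)" where
  "nabla_right bin u = (\<lambda>(m1, m2, m3). \<Sum>(m, n)\<in>supp u.
      u (m, n) * basis m m1 * nabla2 bin (basis n) (m2, m3))"

end

theory Submission
  imports Defs
begin

(* Pairing against monomials makes nabla_2 the transpose of vee^2:
   nabla_2 g (m1, m2) = g (vee^2 (m1, m2)) for admissible monomials m1, m2.
   A nonempty monomial T arises as vee^2 (m1, m2) only from (T, 1), (1, T) and, when
   T = vee^2 (T1, T2), from (T1, T2); this gives the explicit formula and (iii).
   Since Delta_a is a homomorphism for vee^2 and the shuffle is the transpose of Delta_a,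
   both sides of the multiplicativity identity at (p, q) are the same finite sum of
   Delta_a p (a1, b1) * Delta_a q (a2, b2) * f (vee^2 (a1, a2)) * g (vee^2 (b1, b2)),
   once indexed by the terms of Delta_a p and Delta_a q, once by those of nabla_2 f and
   nabla_2 g; the two indexings differ by exchanging a2 and b1.
   Coassociativity fails because vee^2 is not associative. *)

lemma basis_apply: "basis a y = (if y = a then 1 else 0)"
  by (simp add: basis_def)

lemma basis_self [simp]: "basis a a = 1"
  by (simp add: basis_def)

lemma supp_basis [simp]: "supp (basis a :: _ \<Rightarrow> 'k::zero_neq_one) = {a}"
  by (auto simp: supp_def basis_def)

lemma pair_basis_left [simp]: "pair (basis a) g = (g a :: 'k::comm_ring_1)"
  by (simp add: pair_def)

lemma pair_basis_right: "finite (supp h) \<Longrightarrow> pair h (basis a) = (h a :: 'k::comm_ring_1)"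
  by (auto simp: pair_def basis_def supp_def if_distrib cong: if_cong)

lemma sum_supp_mult_basis:
  "finite (supp v) \<Longrightarrow> (\<Sum>y\<in>supp v. v y * basis y z) = (v z :: 'k::comm_ring_1)"
  by (auto simp: supp_def basis_apply if_distrib cong: if_cong)

lemma tensor_basis [simp]: "tensor (basis a) (basis b) = (basis (a, b) :: _ \<Rightarrow> 'k::comm_ring_1)"
  by (auto simp: tensor_def basis_def fun_eq_iff)

lemma basis_fst_snd: "basis (fst x) a * basis (snd x) b = (basis x (a, b) :: 'k::comm_ring_1)"
  by (cases x) (simp add: basis_apply)

lemma finite_supp_tensor:
  assumes "finite (supp f)" and "finite (supp g)"
  shows "finite (supp (tensor f g :: _ \<Rightarrow> 'k::comm_ring_1))"
proof (rule finite_subset)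
  show "supp (tensor f g) \<subseteq> supp f \<times> supp g"
    by (auto simp: supp_def tensor_def)
qed (use assms in simp)

lemma sum_eq_sum_supp: "finite A \<Longrightarrow> supp h \<subseteq> A \<Longrightarrow> sum h A = sum h (supp h)"
  by (rule sum.mono_neutral_right) (auto simp: supp_def)

lemma sum_supp_comp_involution:
  assumes "\<And>x. \<sigma> (\<sigma> x) = x"
  shows "sum (h \<circ> \<sigma>) (supp (h \<circ> \<sigma>)) = sum h (supp h)"
  by (rule sum.reindex_bij_witness[of _ \<sigma> \<sigma>]) (auto simp: supp_def assms)

lemma finite_supp_mlin:
  "(\<And>f. f \<in> set fs \<Longrightarrow> finite (supp f)) \<Longrightarrow>
    finite (supp (mlin F fs :: _ \<Rightarrow> 'k::comm_ring_1))"
proof (induction fs arbitrary: F)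
  case (Cons f fs)
  have "supp (mlin F (f # fs)) \<subseteq> (\<Union>a\<in>supp f. supp (mlin (\<lambda>as. F (a # as)) fs))"
    by (auto simp: supp_def elim!: sum.not_neutral_contains_not_neutral)
  moreover have "finite (\<Union>a\<in>supp f. supp (mlin (\<lambda>as. F (a # as)) fs))"
    using Cons by simp
  ultimately show ?case by (rule finite_subset)
qed simp

lemma mlin_nonzeroE:
  assumes "mlin F fs y \<noteq> (0::'k::comm_ring_1)"
  obtains as where "list_all2 (\<lambda>a f. f a \<noteq> 0) as fs" and "y = F as"
  using assms
proof (induction fs arbitrary: F thesis)
  case Nil
  then show ?case by (simp add: basis_apply split: if_splits)
next
  case (Cons f fs)
  obtain a where "f a \<noteq> 0" and "mlin (\<lambda>as. F (a # as)) fs y \<noteq> 0"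
    using Cons.prems(2)
    by (auto simp: supp_def dest: mult_not_zero elim!: sum.not_neutral_contains_not_neutral)
  with Cons.IH[of "\<lambda>as. F (a # as)"] Cons.prems(1) show ?case by auto
qed

lemma pair_mlin_pair:
  assumes "finite (supp h)"
  shows "pair h (mlin F [u, v]) =
    (\<Sum>x\<in>supp u. \<Sum>y\<in>supp v. u x * v y * (h (F [x, y]) :: 'k::comm_ring_1))"
proof -
  have "pair h (mlin F [u, v]) =
      (\<Sum>z\<in>supp h. \<Sum>x\<in>supp u. \<Sum>y\<in>supp v.
        u x * v y * (h z * basis (F [x, y]) z))"
    by (simp add: pair_def sum_distrib_left mult_ac)
  also have "\<dots> = (\<Sum>x\<in>supp u. \<Sum>y\<in>supp v. u x * v y * pair h (basis (F [x, y])))"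
    by (subst sum.swap) (simp add: pair_def sum_distrib_left sum.swap[of _ "supp h"])
  finally show ?thesis
    using assms by (simp add: pair_basis_right)
qed

lemma trees_of_simps [simp]:
  "trees_of [] = []"
  "trees_of (One # ms) = trees_of ms"
  "trees_of (Tr t # ms) = t # trees_of ms"
  by (simp_all add: trees_of_def)

lemma set_trees_of: "t \<in> set (trees_of ms) \<longleftrightarrow> Tr t \<in> set ms"
  by (auto simp: trees_of_def split: mono.splits)

lemma length_trees_of_le: "length (trees_of ms) \<le> length ms"
  by (induction ms) (auto simp: trees_of_def split: mono.splits)

lemma vee_mono_One_left [simp]: "vee_mono [One, m] = m"
  and vee_mono_One_right [simp]: "vee_mono [m, One] = m"
  and vee_mono_Tr_Tr [simp]: "vee_mono [Tr a, Tr b] = Tr (Node [a, b])"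
  by (cases m; simp add: vee_mono_def)+

lemma vee_mono_eq_One_iff: "vee_mono [m1, m2] = One \<longleftrightarrow> m1 = One \<and> m2 = One"
  by (cases m1; cases m2) auto

lemma validm_vee_mono:
  assumes "\<And>m. m \<in> set ms \<Longrightarrow> validm bin m" and "bin \<Longrightarrow> length ms = 2"
  shows "validm bin (vee_mono ms)"
proof -
  have "reduced t \<and> (bin \<longrightarrow> binary t)" if "t \<in> set (trees_of ms)" for t
    using that assms(1) by (fastforce simp: set_trees_of)
  moreover have "bin \<Longrightarrow> length (trees_of ms) \<le> 2"
    using assms(2) length_trees_of_le[of ms] by simp
  ultimately show ?thesis
    by (auto simp: vee_mono_def split: list.split)
qed

lemma finite_supp_deltaT: "finite (supp (deltaT t :: _ \<Rightarrow> 'k::comm_ring_1))"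
proof (induction t)
  case (Leaf x)
  have "supp (deltaT (Leaf x) :: _ \<Rightarrow> 'k) \<subseteq> {(Tr (Leaf x), One), (One, Tr (Leaf x))}"
    by (auto simp: supp_def basis_apply)
  then show ?case by (rule finite_subset) simp
next
  case (Node ts)
  then show ?case by (auto simp: veeT_def intro!: finite_supp_mlin)
qed

lemma finite_supp_deltaA: "finite (supp (deltaA m :: _ \<Rightarrow> 'k::comm_ring_1))"
  by (cases m) (simp_all add: finite_supp_deltaT)

lemma deltaT_nonzero_validm:
  assumes "validm bin (Tr t)" and "deltaT t (m, n) \<noteq> (0::'k::comm_ring_1)"
  shows "validm bin m \<and> validm bin n"
  using assms
proof (induction t arbitrary: m n)
  case (Leaf x)
  then show ?case by (auto simp: basis_apply split: if_splits)
next
  case (Node ts)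
  from Node.prems(2) obtain ps where
    ps: "list_all2 (\<lambda>p f. f p \<noteq> (0::'k)) ps (map deltaT ts)" and
    mn: "(m, n) = (vee_mono (map fst ps), vee_mono (map snd ps))"
    by (auto simp: veeT_def elim: mlin_nonzeroE)
  have "validm bin (fst p) \<and> validm bin (snd p)" if "p \<in> set ps" for p
  proof -
    obtain t where "t \<in> set ts" and "deltaT t p \<noteq> (0::'k)"
      using ps \<open>p \<in> set ps\<close> by (fastforce simp: list_all2_conv_all_nth in_set_conv_nth)
    with Node.IH[of t "fst p" "snd p"] Node.prems(1) show ?thesis by auto
  qed
  moreover have "length ps = length ts"
    using list_all2_lengthD[OF ps] by simp
  ultimately show ?case
    using Node.prems(1) mn by (auto intro!: validm_vee_mono)
qed

lemma deltaA_nonzero_validm: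
  "validm bin p \<Longrightarrow> deltaA p (m, n) \<noteq> (0::'k::comm_ring_1) \<Longrightarrow>
    validm bin m \<and> validm bin n"
  by (cases p) (auto simp: basis_apply deltaT_nonzero_validm split: if_splits)

lemma veeT_unit_left:
  "finite (supp v) \<Longrightarrow> veeT [basis (One, One), v] = (v :: _ \<Rightarrow> 'k::comm_ring_1)"
  by (simp add: fun_eq_iff veeT_def sum_supp_mult_basis)

lemma veeT_unit_right:
  "finite (supp u) \<Longrightarrow> veeT [u, basis (One, One)] = (u :: _ \<Rightarrow> 'k::comm_ring_1)"
  by (simp add: fun_eq_iff veeT_def sum_supp_mult_basis)

lemma deltaA_vee_mono:
  "deltaA (vee_mono [p, q]) = (veeT [deltaA p, deltaA q] :: _ \<Rightarrow> 'k::comm_ring_1)"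
  by (cases p; cases q)
    (simp_all add: veeT_unit_left veeT_unit_right finite_supp_deltaT)

lemma vee2_basis:
  "vee2 (basis m1) (basis m2) = (basis (vee_mono [m1, m2]) :: _ \<Rightarrow> 'k::comm_ring_1)"
  by (simp add: vee2_def fun_eq_iff)

lemma nabla2_apply:
  "nabla2 bin g (m1, m2) =
     (if validm bin m1 \<and> validm bin m2 then g (vee_mono [m1, m2]) else (0::'k::comm_ring_1))"
  by (simp add: nabla2_def vee2_basis)

lemma finite_vee_mono_preimage: "finite {(m1, m2). vee_mono [m1, m2] = h}"
proof -
  define S where "S = insert h (insert One (case h of Tr (Node ts) \<Rightarrow> Tr ` set ts | _ \<Rightarrow> {}))"
  have "{(m1, m2). vee_mono [m1, m2] = h} \<subseteq> S \<times> S"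
  proof safe
    fix m1 m2 assume "h = vee_mono [m1, m2]"
    then show "m1 \<in> S" "m2 \<in> S" by (cases m1; cases m2; simp add: S_def)+
  qed
  moreover have "finite S"
    by (simp add: S_def split: mono.split tree.split)
  ultimately show ?thesis
    by (simp add: finite_subset)
qed

lemma finite_supp_nabla2:
  assumes "finite (supp f)"
  shows "finite (supp (nabla2 bin f))"
proof (rule finite_subset)
  show "supp (nabla2 bin f) \<subseteq> (\<Union>h\<in>supp f. {(m1, m2). vee_mono [m1, m2] = h})"
    by (auto simp: supp_def nabla2_apply split: if_splits)
  show "finite (\<Union>h\<in>supp f. {(m1, m2). vee_mono [m1, m2] = h})"
    using assms finite_vee_mono_preimage by blast
qed

lemma inAA_nabla2: "inA bin f \<Longrightarrow> inAA bin (nabla2 bin f)"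
  by (auto simp: inA_def inAA_def nabla2_apply finite_supp_nabla2 split: if_splits)

lemma nabla2_add: "nabla2 bin (\<lambda>m. f m + g m) = (\<lambda>p. nabla2 bin f p + nabla2 bin g p)"
  by (auto simp: fun_eq_iff nabla2_apply)

lemma nabla2_scale: "nabla2 bin (\<lambda>m. c * f m) = (\<lambda>p. c * nabla2 bin f p)"
  by (auto simp: fun_eq_iff nabla2_apply)

lemma nabla2_unit: "nabla2 bin (basis One) = (basis (One, One) :: _ \<Rightarrow> 'k::comm_ring_1)"
  by (auto simp: fun_eq_iff nabla2_apply basis_apply vee_mono_eq_One_iff)

lemma nabla2_basis_Node2:
  assumes "validm bin (Tr (Node [t1, t2]))"
  shows "nabla2 bin (basis (Tr (Node [t1, t2])) :: _ \<Rightarrow> 'k::comm_ring_1) =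
    (\<lambda>p. basis (Tr (Node [t1, t2]), One) p + basis (One, Tr (Node [t1, t2])) p +
      basis (Tr t1, Tr t2) p)"
proof (intro ext, clarify)
  fix m1 m2
  have "validm bin (Tr t1)" "validm bin (Tr t2)"
    using assms by auto
  with assms show "nabla2 bin (basis (Tr (Node [t1, t2]))) (m1, m2) =
    basis (Tr (Node [t1, t2]), One) (m1, m2) + basis (One, Tr (Node [t1, t2])) (m1, m2) +
    (basis (Tr t1, Tr t2) (m1, m2) :: 'k)"
    by (cases m1; cases m2) (auto simp: nabla2_apply basis_apply)
qed

lemma nabla2_basis_arity_neq_2:
  assumes "validm bin (Tr t)" and "arity t \<noteq> 2"
  shows "nabla2 bin (basis (Tr t) :: _ \<Rightarrow> 'k::comm_ring_1) =
    (\<lambda>p. basis (Tr t, One) p + basis (One, Tr t) p)"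
proof (intro ext, clarify)
  fix m1 m2
  from assms show "nabla2 bin (basis (Tr t)) (m1, m2) =
    basis (Tr t, One) (m1, m2) + (basis (One, Tr t) (m1, m2) :: 'k)"
    by (cases m1; cases m2) (auto simp: nabla2_apply basis_apply)
qed

lemma inAbarAbar_nabla2':
  assumes "inAbar bin (f :: _ \<Rightarrow> 'k::comm_ring_1)"
  shows "inAbarAbar bin (nabla2' bin f)"
proof -
  have f: "finite (supp f)" "f One = 0" "\<And>m. f m \<noteq> 0 \<Longrightarrow> validm bin m"
    using assms by (auto simp: inAbar_def inA_def)
  have "supp (nabla2' bin f) \<subseteq> supp (nabla2 bin f) \<union> supp f \<times> {One} \<union> {One} \<times> supp f"
    by (auto simp: supp_def nabla2'_def tensor_def basis_apply split: if_splits)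
  then have "finite (supp (nabla2' bin f))"
    by (rule finite_subset) (simp add: f(1) finite_supp_nabla2)
  moreover have "validm bin m \<and> validm bin n" if "nabla2' bin f (m, n) \<noteq> 0" for m n
    using that f(3) by (auto simp: nabla2'_def nabla2_apply tensor_def basis_apply split: if_splits)
  moreover have "nabla2' bin f (One, m) = 0 \<and> nabla2' bin f (m, One) = 0" for m
    using f by (cases "validm bin m") (auto simp: nabla2'_def nabla2_apply tensor_def basis_apply)
  ultimately show ?thesis
    by (auto simp: inAbarAbar_def inAA_def)
qed

lemma shuffle_basis_apply:
  "shuffle bin (basis m) (basis m') p = (if validm bin p then deltaA p (m, m') else 0)"
  by (simp add: shuffle_def)

lemma nabla2_shuffle_expansion:
  fixes f g :: "'x mono \<Rightarrow> 'k::comm_ring_1"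
  assumes "validm bin p" "validm bin q" "finite (supp f)" "finite (supp g)"
  shows "nabla2 bin (shuffle bin f g) (p, q) =
    (\<Sum>(x, y)\<in>supp (deltaA p :: _ \<Rightarrow> 'k) \<times> supp (deltaA q :: _ \<Rightarrow> 'k).
      deltaA p x * deltaA q y * (f (vee_mono [fst x, fst y]) * g (vee_mono [snd x, snd y])))"
    (is "_ = ?rhs")
proof -
  have "validm bin (vee_mono [p, q])"
    using assms by (intro validm_vee_mono) auto
  then have "nabla2 bin (shuffle bin f g) (p, q) = pair (tensor f g) (veeT [deltaA p, deltaA q])"
    using assms by (simp add: nabla2_apply shuffle_def deltaA_vee_mono)
  also have "\<dots> = ?rhs"
    unfolding veeT_def pair_mlin_pair[OF finite_supp_tensor[OF assms(3,4)]]
    by (simp add: sum.cartesian_product tensor_def split_def)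
  finally show ?thesis .
qed

lemma tprod_nabla2_expansion:
  assumes "validm bin p" "validm bin q"
  shows "tprod bin (nabla2 bin f) (nabla2 bin g) (p, q) =
    (\<Sum>((a1, a2), (b1, b2))\<in>supp (nabla2 bin f) \<times> supp (nabla2 bin g).
      deltaA p (a1, b1) * deltaA q (a2, b2) *
      (f (vee_mono [a1, a2]) * g (vee_mono [b1, b2])) :: 'k::comm_ring_1)"
    (is "_ = ?rhs")
proof -
  have "tprod bin (nabla2 bin f) (nabla2 bin g) (p, q) =
      (\<Sum>(a, b)\<in>supp (nabla2 bin f) \<times> supp (nabla2 bin g).
        nabla2 bin f a * nabla2 bin g b * deltaA p (fst a, fst b) * deltaA q (snd a, snd b))"
    using assms by (simp add: tprod_def shuffle_basis_apply sum.cartesian_product split_def)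
  also have "\<dots> = ?rhs"
    by (rule sum.cong) (auto simp: supp_def nabla2_apply split: if_splits)
  finally show ?thesis .
qed

lemma nabla2_shuffle:
  fixes f g :: "'x mono \<Rightarrow> 'k::comm_ring_1"
  assumes f: "inA bin f" and g: "inA bin g"
  shows "nabla2 bin (shuffle bin f g) = tprod bin (nabla2 bin f) (nabla2 bin g)"
proof (intro ext, clarify)
  fix p q :: "'x mono"
  show "nabla2 bin (shuffle bin f g) (p, q) = tprod bin (nabla2 bin f) (nabla2 bin g) (p, q)"
  proof (cases "validm bin p \<and> validm bin q")
    case False
    then show ?thesis by (auto simp: nabla2_apply tprod_def shuffle_def)
  next
    case True
    let ?Dp = "deltaA p :: _ \<Rightarrow> 'k" and ?Dq = "deltaA q :: _ \<Rightarrow> 'k"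
    let ?u = "nabla2 bin f" and ?v = "nabla2 bin g"
    define H where "H = (\<lambda>(x, y). ?Dp x * ?Dq y *
      (f (vee_mono [fst x, fst y]) * g (vee_mono [snd x, snd y])))"
    define \<sigma> :: "('x mono \<times> 'x mono) \<times> ('x mono \<times> 'x mono) \<Rightarrow> _"
      where "\<sigma> = (\<lambda>((a1, a2), (b1, b2)). ((a1, b1), (a2, b2)))"
    have fin: "finite (supp f)" "finite (supp g)"
      using f g by (simp_all add: inA_def)
    have "nabla2 bin (shuffle bin f g) (p, q) = sum H (supp ?Dp \<times> supp ?Dq)"
      using True fin by (simp add: nabla2_shuffle_expansion H_def)
    also have "\<dots> = sum H (supp H)"
      by (rule sum_eq_sum_supp) (simp add: finite_supp_deltaA, auto simp: supp_def H_def)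
    also have "\<dots> = sum (H \<circ> \<sigma>) (supp (H \<circ> \<sigma>))"
      by (rule sum_supp_comp_involution[symmetric]) (auto simp: \<sigma>_def)
    also have "\<dots> = sum (H \<circ> \<sigma>) (supp ?u \<times> supp ?v)"
    proof (rule sum_eq_sum_supp[symmetric])
      show "finite (supp ?u \<times> supp ?v)"
        using fin by (simp add: finite_supp_nabla2)
      show "supp (H \<circ> \<sigma>) \<subseteq> supp ?u \<times> supp ?v"
      proof
        fix c assume c: "c \<in> supp (H \<circ> \<sigma>)"
        obtain a1 a2 b1 b2 where c_eq: "c = ((a1, a2), (b1, b2))"
          by (metis prod.collapse)
        from c have "?Dp (a1, b1) \<noteq> 0" "?Dq (a2, b2) \<noteq> 0"
          and "f (vee_mono [a1, a2]) \<noteq> 0" "g (vee_mono [b1, b2]) \<noteq> 0"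
          by (auto simp: c_eq supp_def H_def \<sigma>_def dest!: mult_not_zero)
        with True show "c \<in> supp ?u \<times> supp ?v"
          by (auto simp: c_eq supp_def nabla2_apply dest: deltaA_nonzero_validm)
      qed
    qed
    also have "\<dots> = tprod bin ?u ?v (p, q)"
      using True by (simp add: tprod_nabla2_expansion H_def \<sigma>_def comp_def split_def)
    finally show ?thesis .
  qed
qed

lemma nabla_left_apply:
  assumes "finite (supp u)"
  shows "nabla_left bin u (m1, m2, m3) =
    (if validm bin m1 \<and> validm bin m2 then u (vee_mono [m1, m2], m3) else (0::'k::comm_ring_1))"
  using sum_supp_mult_basis[OF assms, of "(vee_mono [m1, m2], m3)"]
  by (auto simp: nabla_left_def nabla2_apply split_def basis_fst_snd mult.assoc)

lemma nabla_right_apply: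
  assumes "finite (supp u)"
  shows "nabla_right bin u (m1, m2, m3) =
    (if validm bin m2 \<and> validm bin m3 then u (m1, vee_mono [m2, m3]) else (0::'k::comm_ring_1))"
  using sum_supp_mult_basis[OF assms, of "(m1, vee_mono [m2, m3])"]
  by (auto simp: nabla_right_def nabla2_apply split_def basis_fst_snd mult.assoc)

lemma nabla2_not_coassociative:
  "\<exists>f :: 'x mono \<Rightarrow> 'k::comm_ring_1. inA bin f \<and>
     nabla_left bin (nabla2 bin f) \<noteq> nabla_right bin (nabla2 bin f)"
proof -
  define x where "x = Leaf (undefined :: 'x)"
  define f :: "'x mono \<Rightarrow> 'k" where "f = basis (Tr (Node [Node [x, x], x]))"
  have f: "inA bin f"
    by (auto simp: inA_def f_def basis_apply x_def)
  have fin: "finite (supp (nabla2 bin f))"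
    using f by (simp add: inA_def finite_supp_nabla2)
  have "nabla_left bin (nabla2 bin f) (Tr x, Tr x, Tr x) = 1"
    unfolding nabla_left_apply[OF fin] by (simp add: nabla2_apply f_def x_def)
  moreover have "nabla_right bin (nabla2 bin f) (Tr x, Tr x, Tr x) = 0"
    unfolding nabla_right_apply[OF fin] by (simp add: nabla2_apply f_def basis_apply x_def)
  ultimately show ?thesis
    using f by (metis zero_neq_one)
qed

theorem lemma4p7p3:
  fixes bin :: bool
  shows
  "\<comment> \<open>(i) nabla_2 is a unital algebra morphism (A, sh) \<rightarrow> (A \<otimes> A, sh \<otimes> sh)\<close>
   (\<forall>f :: 'x::countable mono \<Rightarrow> 'k::field_char_0. inA bin f \<longrightarrow> inAA bin (nabla2 bin f)) \<and>
   (\<forall>f g :: 'x mono \<Rightarrow> 'k. inA bin f \<longrightarrow> inA bin g \<longrightarrow>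
      nabla2 bin (\<lambda>m. f m + g m) = (\<lambda>p. nabla2 bin f p + nabla2 bin g p)) \<and>
   (\<forall>(c :: 'k) (f :: 'x mono \<Rightarrow> 'k). inA bin f \<longrightarrow>
      nabla2 bin (\<lambda>m. c * f m) = (\<lambda>p. c * nabla2 bin f p)) \<and>
   (nabla2 bin (basis One :: 'x mono \<Rightarrow> 'k) = basis (One, One)) \<and>
   (\<forall>f g :: 'x mono \<Rightarrow> 'k. inA bin f \<longrightarrow> inA bin g \<longrightarrow>
      nabla2 bin (shuffle bin f g) = tprod bin (nabla2 bin f) (nabla2 bin g)) \<and>
   \<comment> \<open>(ii) not coassociative, and the explicit formula on nonempty monomials\<close>
   (\<exists>f :: 'x mono \<Rightarrow> 'k. inA bin f \<and>
      nabla_left bin (nabla2 bin f) \<noteq> nabla_right bin (nabla2 bin f)) \<and>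
   (\<forall>(t :: 'x tree) t1 t2. validm bin (Tr t) \<longrightarrow> t = Node [t1, t2] \<longrightarrow>
      nabla2 bin (basis (Tr t) :: 'x mono \<Rightarrow> 'k) =
        (\<lambda>p. basis (Tr t, One) p + basis (One, Tr t) p + basis (Tr t1, Tr t2) p)) \<and>
   (\<forall>t :: 'x tree. validm bin (Tr t) \<longrightarrow> arity t \<noteq> 2 \<longrightarrow>
      nabla2 bin (basis (Tr t) :: 'x mono \<Rightarrow> 'k) =
        (\<lambda>p. basis (Tr t, One) p + basis (One, Tr t) p)) \<and>
   \<comment> \<open>(iii) reduced coproduct maps Abar into Abar \<otimes> Abar\<close>
   (\<forall>f :: 'x mono \<Rightarrow> 'k. inAbar bin f \<longrightarrow> inAbarAbar bin (nabla2' bin f))"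
  by (intro conjI allI impI)
    (simp_all add: inAA_nabla2 nabla2_add nabla2_scale nabla2_unit nabla2_shuffle
      nabla2_not_coassociative nabla2_basis_Node2 nabla2_basis_arity_neq_2 inAbarAbar_nabla2')

end
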